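(* Let $Z$ be a topological space which is the disjoint union $Z=X\sqcup Y$ of two subsets (with subspace topologies), with $X$ open in $Z$. Define $f:\mathrm{Closed}(X)\to\mathrm{Closed}(Y)$ by $f(A)=\mathrm{Cl}_Z(A)\cap Y$ and $g:\mathrm{Closed}(Y)\to\mathrm{Closed}(X)$ by $g(B)=\mathrm{Cl}_Z(B)\cap X$. Then $(f,g)$ is an admissible pair and $Z$ and $X+_{f,g}Y$ have the same topology.
   Context: $\mathrm{Closed}(A)$ is the set of closed subsets of a space $A$. A map $f:\mathrm{Closed}(X)\to\mathrm{Closed}(Y)$ is admissible if $f(\emptyset)=\emptyset$ and $f(A_1\cup A_2)=f(A_1)\cup f(A_2)$. An admissible pair is a pair of admissible maps $f:\mathrm{Closed}(X)\to\mathrm{Closed}(Y)$, $g:\mathrm{Closed}(Y)\to\mathrm{Closed}(X)$ with $g(f(A))\subseteq A$ and $f(g(B))\subseteq B$ for all closed $A\subseteq X$, $B\subseteq Y$. Then $X+_{f,g}Y$ is the set $X\sqcup Y$ with the topology whose closed sets are the $D$ with $D\cap X$ closed in $X$, $D\cap Y$ closed in $Y$, $f(D\cap X)\subseteq D$ and $g(D\cap Y)\subseteq D$. *)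

theory Defs
  imports "HOL-Analysis.Analysis"
begin

definition admissible_map :: "'a topology \<Rightarrow> 'b topology \<Rightarrow> ('a set \<Rightarrow> 'b set) \<Rightarrow> bool" where
  "admissible_map X Y f \<longleftrightarrow>
     (\<forall>A. closedin X A \<longrightarrow> closedin Y (f A)) \<and>
     f {} = {} \<and>
     (\<forall>A1 A2. closedin X A1 \<and> closedin X A2 \<longrightarrow> f (A1 \<union> A2) = f A1 \<union> f A2)"

definition admissible_pair ::
  "'a topology \<Rightarrow> 'b topology \<Rightarrow> ('a set \<Rightarrow> 'b set) \<Rightarrow> ('b set \<Rightarrow> 'a set) \<Rightarrow> bool" where
  "admissible_pair X Y f g \<longleftrightarrow>
     admissible_map X Y f \<and> admissible_map Y X g \<and>
     (\<forall>A. closedin X A \<longrightarrow> g (f A) \<subseteq> A) \<and>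
     (\<forall>B. closedin Y B \<longrightarrow> f (g B) \<subseteq> B)"

text \<open>Closed sets of X +_{f,g} Y, for X and Y topologies on disjoint carriers
  inside a common type (so that X \<squnion> Y is topspace X \<union> topspace Y).\<close>
definition glue_closed ::
  "'a topology \<Rightarrow> 'a topology \<Rightarrow> ('a set \<Rightarrow> 'a set) \<Rightarrow> ('a set \<Rightarrow> 'a set) \<Rightarrow> 'a set \<Rightarrow> bool" where
  "glue_closed X Y f g D \<longleftrightarrow>
     D \<subseteq> topspace X \<union> topspace Y \<and>
     closedin X (D \<inter> topspace X) \<and> closedin Y (D \<inter> topspace Y) \<and>
     f (D \<inter> topspace X) \<subseteq> D \<and> g (D \<inter> topspace Y) \<subseteq> D"

end

theory Submission
  imports Defs
begin

text \<open>For a closed set D of Z = X \<union> Y, the closure of D \<inter> X stays inside D; splitting that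
  closure into its X-part and its Y-part gives exactly closedness of D \<inter> X in X and the
  condition f (D \<inter> X) \<subseteq> D, and symmetrically for Y. Since closure commutes with binary
  unions, these conditions are also sufficient. Openness of X is needed only for g (f A) \<subseteq> A:
  the closure of a subset of Y cannot meet the open set X, so g \<circ> f is identically empty.\<close>

lemma admissible_map_closure_of_Int:
  "admissible_map (subtopology Z S) (subtopology Z T) (\<lambda>A. Z closure_of A \<inter> T)"
  unfolding admissible_map_def
  by (simp add: closedin_subtopology_Int_closed Int_commute Int_Un_distrib)

lemma closure_of_Int_closure_of_Int_subset:
  assumes "closedin (subtopology Z T) B"
  shows "Z closure_of (Z closure_of B \<inter> S) \<inter> T \<subseteq> B"
proof -
  have "Z closure_of (Z closure_of B \<inter> S) \<subseteq> Z closure_of B"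
    by (metis closure_of_closure_of closure_of_mono inf_le1)
  with assms show ?thesis
    by (auto simp: closedin_Int_closure_of)
qed

lemma admissible_pair_closure_of:
  assumes "openin Z X" and "X \<inter> Y = {}"
  shows "admissible_pair (subtopology Z X) (subtopology Z Y)
           (\<lambda>A. Z closure_of A \<inter> Y) (\<lambda>B. Z closure_of B \<inter> X)"
proof -
  have "X \<inter> Z closure_of (Z closure_of A \<inter> Y) = {}" for A
    using assms by (auto simp: openin_Int_closure_of_eq_empty)
  then show ?thesis
    unfolding admissible_pair_def
    by (auto simp: admissible_map_closure_of_Int closure_of_Int_closure_of_Int_subset)
qed

lemma closedin_iff_closure_of_Int_subset:
  assumes "S \<union> T = topspace Z"
  shows "closedin Z D \<longleftrightarrow>
           D \<subseteq> S \<union> T \<and> Z closure_of (D \<inter> S) \<subseteq> D \<and> Z closure_of (D \<inter> T) \<subseteq> D"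
proof (cases "D \<subseteq> S \<union> T")
  case True
  then have "D = D \<inter> S \<union> D \<inter> T"
    by blast
  then have "Z closure_of D = Z closure_of (D \<inter> S) \<union> Z closure_of (D \<inter> T)"
    by (metis closure_of_Un)
  moreover have "closedin Z D \<longleftrightarrow> Z closure_of D \<subseteq> D"
    using True assms closure_of_subset_eq[of D Z] by simp
  ultimately show ?thesis
    using True by simp
next
  case False
  with assms show ?thesis
    using closedin_subset by blast
qed

lemma closure_of_Int_subset_iff:
  assumes "S \<union> T = topspace Z"
  shows "Z closure_of (D \<inter> S) \<subseteq> D \<longleftrightarrow>
           closedin (subtopology Z S) (D \<inter> S) \<and> Z closure_of (D \<inter> S) \<inter> T \<subseteq> D"
proof -
  have "D \<inter> S \<subseteq> topspace Z"
    using assms by blast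
  then have "D \<inter> S \<subseteq> Z closure_of (D \<inter> S)"
    by (rule closure_of_subset)
  moreover have "Z closure_of (D \<inter> S) \<subseteq> S \<union> T"
    by (simp add: assms closure_of_subset_topspace)
  ultimately show ?thesis
    by (auto simp: closedin_Int_closure_of)
qed

theorem mainTheorem9:
  fixes Z :: "'a topology" and X Y :: "'a set"
  assumes "X \<union> Y = topspace Z" and "X \<inter> Y = {}" and "openin Z X"
  defines "f \<equiv> (\<lambda>A. Z closure_of A \<inter> Y)"
      and "g \<equiv> (\<lambda>B. Z closure_of B \<inter> X)"
  shows "admissible_pair (subtopology Z X) (subtopology Z Y) f g \<and>
         (\<forall>D. closedin Z D \<longleftrightarrow> glue_closed (subtopology Z X) (subtopology Z Y) f g D)"
proof -
  have "topspace (subtopology Z X) = X" "topspace (subtopology Z Y) = Y" "Y \<union> X = topspace Z"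
    using assms(1) by auto
  note split_closure = closure_of_Int_subset_iff[OF assms(1)] closure_of_Int_subset_iff[OF this(3)]
  have "closedin Z D \<longleftrightarrow> glue_closed (subtopology Z X) (subtopology Z Y) f g D" for D
    unfolding closedin_iff_closure_of_Int_subset[OF assms(1)] split_closure
      glue_closed_def f_def g_def \<open>topspace (subtopology Z X) = X\<close> \<open>topspace (subtopology Z Y) = Y\<close>
    by blast
  then show ?thesis
    unfolding f_def g_def using admissible_pair_closure_of[OF assms(3,2)] by blast
qed

end
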